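(* Let $p$ be a prime and let $G \cong \mathbb{Z}_{p^{e_1}}\oplus\mathbb{Z}_{p^{e_2}}\oplus\cdots\oplus\mathbb{Z}_{p^{e_l}}$, where $1\le e_1\le e_2\le\cdots\le e_l$ are integers, so $G$ has exponent $n=p^{e_l}$. Let $A$ be a non-empty subset of $]p^{e_l}[=\{1,2,\dots,p^{e_l}\}$ such that the elements of $A$ are pairwise incongruent modulo $p$ and none of them is divisible by $p$. Then \[ d_A(G)\le \left\lceil \frac{1}{|A|}\Big(1+\sum_{i=1}^{l}(p^{e_i}-1)\Big)\right\rceil . \]
   Context: For an integer $x\ge1$, $]x[=\{1,2,\dots,x\}$. Let $G$ be a finite abelian group (written additively) of exponent $n$ and let $\emptyset\ne A\subseteq\, ]n[$. The constant $d_A(G)$ is the least positive integer $t$ such that for every sequence $g_1,\dots,g_t$ of (not necessarily distinct) elements of $G$ there exist $\ell\ge1$, indices $1\le i_1<\dots<i_\ell\le t$ and elements $a_1,\dots,a_\ell\in A$ (repetitions allowed) with $\sum_{j=1}^{\ell}a_j g_{i_j}=0$ in $G$. $\lceil x\rceil$ denotes the smallest integer $\ge x$. *)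

theory Defs
  imports Complex_Main "HOL-Computational_Algebra.Primes"
begin

text \<open>The group G = Z_{m 0} + ... + Z_{m (l-1)} is represented concretely: an element is
  a vector g :: nat \<Rightarrow> int, where coordinate k (k < l) is read modulo m k.
  A sequence g_1..g_t of elements is a function g :: nat \<Rightarrow> nat \<Rightarrow> int,
  g i being the i-th term (i < t).\<close>

definition has_A_zero_sum ::
  "nat \<Rightarrow> (nat \<Rightarrow> nat) \<Rightarrow> nat set \<Rightarrow> nat \<Rightarrow> (nat \<Rightarrow> nat \<Rightarrow> int) \<Rightarrow> bool" where
  "has_A_zero_sum l m A t g \<longleftrightarrow>
     (\<exists>I a. I \<noteq> {} \<and> I \<subseteq> {0..<t} \<and> (\<forall>i\<in>I. a i \<in> A) \<and>
        (\<forall>k<l. int (m k) dvd (\<Sum>i\<in>I. int (a i) * g i k)))"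

definition dA :: "nat \<Rightarrow> (nat \<Rightarrow> nat) \<Rightarrow> nat set \<Rightarrow> nat" where
  "dA l m A = (LEAST t. t \<ge> 1 \<and> (\<forall>g. has_A_zero_sum l m A t g))"

end

theory Submission
  imports Defs "HOL-Number_Theory.Cong" "HOL-Computational_Algebra.Polynomial" "HOL-Library.FuncSet"
begin

text \<open>Suppose g_0, ..., g_{t-1} has no A-weighted zero sum although
  N = \<Sum>k (p^{e_k} - 1) < t |A|. Because the elements of A are distinct mod p, there are
  integer weights \<omega> on X = {0} \<union> A with \<omega> 0 = 1 whose power sums \<Sum>x \<omega>(x) x^j vanish mod p
  for j < |A|; as |A| \<le> p, the same holds for products of binomial coefficients of total
  degree < |A|. Now sum \<Prod>i \<omega>(x_i) \<Phi>(\<Sum>i x_i g_i) over all choices x_i \<in> X, where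
  \<Phi>(v) = \<Prod>k \<Sum>j<p^{e_k} (-1)^j C(v_k, j). Modulo p, \<Phi> is the indicator of 0 in G, so only
  the choice x = 0 contributes and the sum is 1. On the other hand \<Phi> is a combination of
  binomial monomials of total degree \<le> N < t |A|, and peeling off one x_i at a time with
  Vandermonde's identity shows that each of them contributes 0 mod p.\<close>

lemma prime_dvd_prime_power_choose:
  fixes p e i :: nat
  assumes p: "prime p" and i: "0 < i" "i < p ^ e"
  shows "p dvd (p ^ e choose i)"
proof (rule ccontr)
  assume "\<not> p dvd (p ^ e choose i)"
  then have "coprime (p ^ e) (p ^ e choose i)"
    using p by (simp add: coprime_commute prime_imp_coprime)
  moreover have "p ^ e dvd i * (p ^ e choose i)"
    using times_binomial_minus1_eq[OF i(1), of "p ^ e"] by simp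
  ultimately have "p ^ e dvd i"
    by (metis coprime_dvd_mult_left_iff)
  with i show False by (simp add: nat_dvd_not_less)
qed

lemma choose_add_prime_power_cong:
  fixes p e h j :: nat
  assumes p: "prime p" and j: "j < p ^ e"
  shows "[(h + p ^ e) choose j = h choose j] (mod p)"
proof -
  have "(h + p ^ e) choose j = (\<Sum>i\<le>j. (p ^ e choose i) * (h choose (j - i)))"
    using vandermonde[of "p ^ e" h j] by (simp add: add.commute)
  also have "[\<dots> = (\<Sum>i\<le>j. if i = 0 then h choose j else 0)] (mod p)"
  proof (rule cong_sum)
    fix i assume "i \<in> {..j}"
    then have "i \<noteq> 0 \<Longrightarrow> p dvd (p ^ e choose i)"
      using j by (intro prime_dvd_prime_power_choose[OF p]) auto
    then show "[(p ^ e choose i) * (h choose (j - i)) = (if i = 0 then h choose j else 0)] (mod p)"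
      by (auto simp: cong_def)
  qed
  finally show ?thesis by simp
qed

lemma alternating_sum_choose_prime_power_cong:
  fixes p e h :: nat
  assumes p: "prime p" and e: "1 \<le> e"
  shows "[(\<Sum>j<p ^ e. (-1) ^ j * int (h choose j)) = (if p ^ e dvd h then 1 else 0)] (mod int p)"
proof (induction h rule: less_induct)
  case (less h)
  have q: "1 < p ^ e"
    using e prime_gt_1_nat[OF p] by (intro one_less_power) auto
  consider "p ^ e \<le> h" | "h = 0" | "0 < h" "h < p ^ e"
    by (cases "p ^ e \<le> h") auto
  then show ?case
  proof cases
    case 1
    define h' where "h' = h - p ^ e"
    have h: "h = h' + p ^ e" "h' < h"
      using 1 q unfolding h'_def by auto
    have shift: "[(\<Sum>j<p ^ e. (-1) ^ j * int (h choose j)) = (\<Sum>j<p ^ e. (-1) ^ j * int (h' choose j))] (mod int p)"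
    proof (intro cong_sum cong_scalar_left)
      fix j assume "j \<in> {..<p ^ e}"
      then show "[int (h choose j) = int (h' choose j)] (mod int p)"
        unfolding h(1) cong_int_iff by (simp add: choose_add_prime_power_cong[OF p])
    qed
    show ?thesis
      using cong_trans[OF shift less[OF h(2)]] h(1) by simp
  next
    case 2
    have "(\<Sum>j<p ^ e. (-1) ^ j * int (h choose j)) = (\<Sum>j<p ^ e. if j = 0 then 1 else 0)"
      using 2 by (intro sum.cong) auto
    then show ?thesis
      using 2 prime_gt_0_nat[OF p] by simp
  next
    case 3
    have "(\<Sum>j<p ^ e. (-1) ^ j * int (h choose j)) = (\<Sum>j\<le>h. (-1) ^ j * int (h choose j))"
      using 3 by (intro sum.mono_neutral_right) (auto simp: binomial_eq_0)
    also have "\<dots> = 0"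
      using 3 by (intro choose_alternating_sum) simp
    moreover have "\<not> p ^ e dvd h"
      using 3 by (meson dvd_imp_le leD)
    ultimately show ?thesis
      by simp
  qed
qed

lemma exists_power_sum_annihilator:
  fixes p :: nat and A :: "nat set"
  assumes p: "prime p" and "finite A" and "inj_on (\<lambda>a. a mod p) A"
  shows "\<exists>c::nat \<Rightarrow> int. \<forall>j<card A. [(0::int) ^ j + (\<Sum>a\<in>A. c a * int a ^ j) = 0] (mod int p)"
  using assms(2,3)
proof (induction A rule: finite_induct)
  case empty
  then show ?case by simp
next
  case (insert b A)
  obtain c where c: "\<forall>j<card A. [(0::int) ^ j + (\<Sum>a\<in>A. c a * int a ^ j) = 0] (mod int p)"
    using insert by auto
  define B where "B = int b"
  have "\<exists>v. [(int a - B) * v = 1] (mod int p)" if a: "a \<in> A" for a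
  proof -
    have "a mod p \<noteq> b mod p"
      using insert a by (auto simp: inj_on_def)
    then have "\<not> int p dvd (int a - B)"
      unfolding B_def by (simp flip: mod_eq_dvd_iff of_nat_mod)
    then have "coprime (int a - B) (int p)"
      using p by (simp add: coprime_commute prime_imp_coprime)
    then show ?thesis by (rule cong_solve_coprime_int)
  qed
  then obtain v where v: "\<forall>a\<in>A. [(int a - B) * v a = 1] (mod int p)" by metis
  \<comment> \<open>Dividing x^j - b^j by x - b (v a inverts a - b mod p) lowers the degree below j.\<close>
  define c' where "c' x = (if x = b then -1 + B * (\<Sum>a\<in>A. c a * v a) else - B * c x * v x)" for x
  show ?case
  proof (intro exI allI impI)
    fix j assume j: "j < card (insert b A)"
    then have jA: "j \<le> card A" using insert.hyps by simp
    define s where "s x = (\<Sum>m<j. B ^ (j - Suc m) * x ^ m)" for x :: int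
    have power_diff_factor: "x ^ j - B ^ j = (x - B) * s x" for x
      unfolding s_def by (rule power_diff_sumr2)
    have expand_new: "(0::int) ^ j + (\<Sum>x\<in>insert b A. c' x * int x ^ j)
        = ((0::int) ^ j - B ^ j) - B * (\<Sum>a\<in>A. c a * v a * (int a ^ j - B ^ j))"
    proof -
      have "(\<Sum>a\<in>A. c' a * int a ^ j) = (\<Sum>a\<in>A. - B * c a * v a * int a ^ j)"
        using insert.hyps by (intro sum.cong) (auto simp: c'_def)
      then have "(\<Sum>x\<in>insert b A. c' x * int x ^ j) = c' b * B ^ j + (\<Sum>a\<in>A. - B * c a * v a * int a ^ j)"
        using insert.hyps by (simp add: B_def)
      then show ?thesis
        by (simp add: c'_def algebra_simps sum_distrib_left sum_subtractf sum_negf)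
    qed
    have factor: "(\<Sum>a\<in>A. c a * v a * (int a ^ j - B ^ j)) = (\<Sum>a\<in>A. c a * ((int a - B) * v a) * s (int a))"
      by (intro sum.cong) (auto simp: power_diff_factor algebra_simps)
    have cancel_inverse: "[(\<Sum>a\<in>A. c a * ((int a - B) * v a) * s (int a)) = (\<Sum>a\<in>A. c a * 1 * s (int a))] (mod int p)"
      using v by (intro cong_sum cong_mult cong_refl) auto
    have regroup: "s 0 + (\<Sum>a\<in>A. c a * s (int a)) = (\<Sum>m<j. B ^ (j - Suc m) * ((0::int) ^ m + (\<Sum>a\<in>A. c a * int a ^ m)))"
      unfolding s_def by (simp add: sum_distrib_left sum_distrib_right sum.distrib sum.swap[of _ A] algebra_simps)
    have old_relations: "[(\<Sum>m<j. B ^ (j - Suc m) * ((0::int) ^ m + (\<Sum>a\<in>A. c a * int a ^ m))) = (\<Sum>m<j. B ^ (j - Suc m) * 0)] (mod int p)"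
      using c jA by (intro cong_sum cong_mult cong_refl) auto
    have "(0::int) ^ j + (\<Sum>x\<in>insert b A. c' x * int x ^ j) = - B * s 0 - B * (\<Sum>a\<in>A. c a * ((int a - B) * v a) * s (int a))"
      unfolding expand_new factor[symmetric] using power_diff_factor[of 0] by simp
    also have "[\<dots> = - B * (s 0 + (\<Sum>a\<in>A. c a * s (int a)))] (mod int p)"
      using cong_diff[OF cong_refl cong_mult[OF cong_refl cancel_inverse]] by (simp add: algebra_simps)
    also have "[- B * (s 0 + (\<Sum>a\<in>A. c a * s (int a))) = 0] (mod int p)"
      unfolding regroup using cong_mult[OF cong_refl old_relations, of "- B"] by simp
    finally show "[(0::int) ^ j + (\<Sum>x\<in>insert b A. c' x * int x ^ j) = 0] (mod int p)" .
  qed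
qed

lemma exists_annihilating_weights:
  fixes p :: nat and A :: "nat set"
  assumes "prime p" and "finite A" and "0 \<notin> A" and "inj_on (\<lambda>a. a mod p) A"
  obtains \<omega> :: "nat \<Rightarrow> int"
  where "\<omega> 0 = 1" and "\<forall>j<card A. [(\<Sum>x\<in>insert 0 A. \<omega> x * int x ^ j) = 0] (mod int p)"
proof -
  obtain c :: "nat \<Rightarrow> int" where c: "\<forall>j<card A. [(0::int) ^ j + (\<Sum>a\<in>A. c a * int a ^ j) = 0] (mod int p)"
    using exists_power_sum_annihilator[OF assms(1,2,4)] by blast
  have "(\<Sum>x\<in>insert 0 A. (c(0 := 1)) x * int x ^ j) = (0::int) ^ j + (\<Sum>a\<in>A. c a * int a ^ j)" for j
    using assms(2,3) by (auto intro: sum.cong)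
  then show ?thesis
    using that[of "c(0 := 1)"] c by simp
qed

lemma annihilating_weights_poly_cong:
  fixes X :: "nat set" and \<omega> :: "nat \<Rightarrow> int" and P :: "int poly"
  assumes ann: "\<forall>j<d. [(\<Sum>x\<in>X. \<omega> x * int x ^ j) = 0] (mod m)" and deg: "degree P < d"
  shows "[(\<Sum>x\<in>X. \<omega> x * poly P (int x)) = 0] (mod m)"
proof -
  have "(\<Sum>x\<in>X. \<omega> x * poly P (int x)) = (\<Sum>i\<le>degree P. coeff P i * (\<Sum>x\<in>X. \<omega> x * int x ^ i))"
    by (simp add: poly_altdef sum_distrib_left sum.swap[of _ X] algebra_simps)
  also have "[\<dots> = (\<Sum>i\<le>degree P. coeff P i * 0)] (mod m)"
    using ann deg by (intro cong_sum cong_mult cong_refl) auto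
  finally show ?thesis by simp
qed

definition binom_prod :: "nat \<Rightarrow> (nat \<Rightarrow> nat) \<Rightarrow> (nat \<Rightarrow> nat) \<Rightarrow> int" where
  "binom_prod l \<gamma> v = (\<Prod>k<l. int (v k choose \<gamma> k))"

lemma binom_prod_add:
  "binom_prod l \<alpha> (\<lambda>k. u k + v k) =
    (\<Sum>\<beta>\<in>PiE {..<l} (\<lambda>k. {..\<alpha> k}). binom_prod l \<beta> u * binom_prod l (\<lambda>k. \<alpha> k - \<beta> k) v)"
proof -
  have "binom_prod l \<alpha> (\<lambda>k. u k + v k) = (\<Prod>k<l. \<Sum>b\<le>\<alpha> k. int (u k choose b) * int (v k choose (\<alpha> k - b)))"
    unfolding binom_prod_def vandermonde[symmetric] by simp
  also have "\<dots> = (\<Sum>\<beta>\<in>PiE {..<l} (\<lambda>k. {..\<alpha> k}). \<Prod>k<l. int (u k choose \<beta> k) * int (v k choose (\<alpha> k - \<beta> k)))"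
    by (rule prod_sum_PiE) auto
  finally show ?thesis
    by (simp add: binom_prod_def prod.distrib)
qed

lemma annihilating_weights_binom_prod_cong:
  fixes p :: nat and X :: "nat set" and \<omega> :: "nat \<Rightarrow> int" and \<gamma> y :: "nat \<Rightarrow> nat"
  assumes p: "prime p" and "d \<le> p"
    and ann: "\<forall>j<d. [(\<Sum>x\<in>X. \<omega> x * int x ^ j) = 0] (mod int p)"
    and deg: "(\<Sum>k<l. \<gamma> k) < d"
  shows "[(\<Sum>x\<in>X. \<omega> x * binom_prod l \<gamma> (\<lambda>k. x * y k)) = 0] (mod int p)"
proof -
  define P where "P = (\<Prod>k<l. \<Prod>i<\<gamma> k. [:- int i, int (y k):])"
  define D where "D = (\<Prod>k<l. int (fact (\<gamma> k)))"
  have deg_factor: "degree (\<Prod>i<\<gamma> k. [:- int i, int (y k):]) \<le> \<gamma> k" for k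
  proof -
    have "degree (\<Prod>i<\<gamma> k. [:- int i, int (y k):]) \<le> (\<Sum>i<\<gamma> k. degree [:- int i, int (y k):])"
      using degree_prod_sum_le[of "{..<\<gamma> k}" "\<lambda>i. [:- int i, int (y k):]"] by (simp add: o_def)
    also have "\<dots> \<le> (\<Sum>i<\<gamma> k. 1)"
      by (intro sum_mono) simp
    finally show ?thesis by simp
  qed
  have "degree P \<le> (\<Sum>k<l. degree (\<Prod>i<\<gamma> k. [:- int i, int (y k):]))"
    using degree_prod_sum_le[of "{..<l}" "\<lambda>k. \<Prod>i<\<gamma> k. [:- int i, int (y k):]"]
    by (simp add: P_def o_def)
  also have "\<dots> \<le> (\<Sum>k<l. \<gamma> k)"
    by (intro sum_mono deg_factor)
  finally have "degree P \<le> (\<Sum>k<l. \<gamma> k)" .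
  then have "degree P < d"
    using deg by simp
  then have "[(\<Sum>x\<in>X. \<omega> x * poly P (int x)) = 0] (mod int p)"
    by (rule annihilating_weights_poly_cong[OF ann])
  moreover have "poly P (int x) = D * binom_prod l \<gamma> (\<lambda>k. x * y k)" for x
  proof -
    have fact_choose: "int (fact g) * int (n choose g) = (\<Prod>i<g. int n - int i)" for g n
      using gbinomial_int_mult_fact[of g "int n"] by (simp add: int_binomial atLeast0LessThan)
    have "poly P (int x) = (\<Prod>k<l. \<Prod>i<\<gamma> k. int (x * y k) - int i)"
      by (simp add: P_def poly_prod algebra_simps)
    also have "\<dots> = (\<Prod>k<l. int (fact (\<gamma> k)) * int (x * y k choose \<gamma> k))"
      by (simp only: fact_choose)
    finally show ?thesis
      by (simp add: D_def binom_prod_def prod.distrib)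
  qed
  ultimately have "int p dvd D * (\<Sum>x\<in>X. \<omega> x * binom_prod l \<gamma> (\<lambda>k. x * y k))"
    by (simp add: cong_0_iff sum_distrib_left algebra_simps)
  moreover have "\<not> int p dvd D"
  proof
    assume "int p dvd D"
    then obtain k where k: "k < l" "int p dvd int (fact (\<gamma> k))"
      using p unfolding D_def by (subst (asm) prime_dvd_prod_iff) auto
    then have "p \<le> \<gamma> k"
      using prime_dvd_fact_iff[OF p] by (simp only: int_dvd_int_iff)
    also have "\<gamma> k \<le> (\<Sum>k<l. \<gamma> k)"
      using k by (intro member_le_sum) auto
    finally show False
      using deg \<open>d \<le> p\<close> by simp
  qed
  ultimately show ?thesis
    using p by (simp add: cong_0_iff prime_dvd_mult_iff)
qed

definition choice_sum ::
  "nat set \<Rightarrow> (nat \<Rightarrow> int) \<Rightarrow> (nat \<Rightarrow> nat \<Rightarrow> nat) \<Rightarrow> nat \<Rightarrow> ((nat \<Rightarrow> nat) \<Rightarrow> int) \<Rightarrow> int" where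
  "choice_sum X \<omega> r s F =
    (\<Sum>w\<in>PiE {..<s} (\<lambda>_. X). (\<Prod>i<s. \<omega> (w i)) * F (\<lambda>k. \<Sum>i<s. w i * r i k))"

lemma choice_sum_Suc:
  assumes "finite X"
  shows "choice_sum X \<omega> r (Suc s) F = (\<Sum>x\<in>X. \<omega> x * choice_sum X \<omega> r s (\<lambda>v. F (\<lambda>k. v k + x * r s k)))"
proof -
  have "choice_sum X \<omega> r (Suc s) F =
      (\<Sum>(x, w)\<in>X \<times> PiE {..<s} (\<lambda>_. X). (\<Prod>i<Suc s. \<omega> ((w(s := x)) i)) * F (\<lambda>k. \<Sum>i<Suc s. (w(s := x)) i * r i k))"
    unfolding choice_sum_def
    by (rule sum.reindex_bij_witness[of _ "\<lambda>(x, w). w(s := x)" "\<lambda>w. (w s, w(s := undefined))"])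
       (auto simp: PiE_def extensional_def less_Suc_eq)
  also have "\<dots> = (\<Sum>(x, w)\<in>X \<times> PiE {..<s} (\<lambda>_. X). \<omega> x * ((\<Prod>i<s. \<omega> (w i)) * F (\<lambda>k. (\<Sum>i<s. w i * r i k) + x * r s k)))"
  proof (intro sum.cong refl, clarify)
    fix x w
    have "(\<Prod>i<s. \<omega> ((w(s := x)) i)) = (\<Prod>i<s. \<omega> (w i))"
      by (intro prod.cong) auto
    moreover have "(\<Sum>i<s. (w(s := x)) i * r i k) = (\<Sum>i<s. w i * r i k)" for k
      by (intro sum.cong) auto
    ultimately show "(\<Prod>i<Suc s. \<omega> ((w(s := x)) i)) * F (\<lambda>k. \<Sum>i<Suc s. (w(s := x)) i * r i k) =
        \<omega> x * ((\<Prod>i<s. \<omega> (w i)) * F (\<lambda>k. (\<Sum>i<s. w i * r i k) + x * r s k))"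
      by simp
  qed
  also have "\<dots> = (\<Sum>x\<in>X. \<omega> x * choice_sum X \<omega> r s (\<lambda>v. F (\<lambda>k. v k + x * r s k)))"
    unfolding choice_sum_def sum_distrib_left by (rule sum.cartesian_product[symmetric])
  finally show ?thesis .
qed

lemma choice_sum_sum:
  "choice_sum X \<omega> r s (\<lambda>v. \<Sum>b\<in>B. c b * G b v) = (\<Sum>b\<in>B. c b * choice_sum X \<omega> r s (G b))"
  unfolding choice_sum_def sum_distrib_left by (subst sum.swap) (simp add: algebra_simps)

lemma choice_sum_cong:
  assumes "\<And>v. [F v = G v] (mod m)"
  shows "[choice_sum X \<omega> r s F = choice_sum X \<omega> r s G] (mod m)"
  unfolding choice_sum_def using assms by (intro cong_sum cong_mult cong_refl)

lemma choice_sum_eq_single: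
  assumes "finite X" and "0 \<in> X" and "\<omega> 0 = 1"
    and "\<And>w. w \<in> PiE {..<s} (\<lambda>_. X) \<Longrightarrow> \<exists>i<s. w i \<noteq> 0 \<Longrightarrow> F (\<lambda>k. \<Sum>i<s. w i * r i k) = 0"
  shows "choice_sum X \<omega> r s F = F (\<lambda>_. 0)"
proof -
  define z where "z = (\<lambda>i\<in>{..<s}. 0 :: nat)"
  have z: "z \<in> PiE {..<s} (\<lambda>_. X)"
    using assms(2) by (simp add: z_def)
  have "choice_sum X \<omega> r s F = (\<Sum>w\<in>{z}. (\<Prod>i<s. \<omega> (w i)) * F (\<lambda>k. \<Sum>i<s. w i * r i k))"
    unfolding choice_sum_def
  proof (rule sum.mono_neutral_right)
    show "finite (PiE {..<s} (\<lambda>_. X))"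
      using assms(1) by (simp add: finite_PiE)
    show "{z} \<subseteq> PiE {..<s} (\<lambda>_. X)"
      using z by simp
    show "\<forall>w\<in>PiE {..<s} (\<lambda>_. X) - {z}. (\<Prod>i<s. \<omega> (w i)) * F (\<lambda>k. \<Sum>i<s. w i * r i k) = 0"
    proof
      fix w assume w: "w \<in> PiE {..<s} (\<lambda>_. X) - {z}"
      then have "w \<noteq> z"
        by simp
      then obtain i where i: "w i \<noteq> z i"
        by (meson ext)
      have "i < s"
      proof (rule ccontr)
        assume "\<not> i < s"
        then have "w i = z i"
          using w PiE_arb[of w "{..<s}" "\<lambda>_. X" i] unfolding z_def by simp
        then show False using i by contradiction
      qed
      with i have "\<exists>i<s. w i \<noteq> 0"
        by (auto simp: z_def)
      then show "(\<Prod>i<s. \<omega> (w i)) * F (\<lambda>k. \<Sum>i<s. w i * r i k) = 0"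
        using assms(4)[of w] w by simp
    qed
  qed
  moreover have "(\<Prod>i<s. \<omega> (z i)) = 1" "(\<lambda>k. \<Sum>i<s. z i * r i k) = (\<lambda>_. 0)"
    using assms(3) by (simp_all add: z_def)
  ultimately show ?thesis
    by simp
qed

lemma choice_sum_binom_prod_cong:
  assumes "finite X"
    and ann: "\<And>y \<gamma>. (\<Sum>k<l. \<gamma> k) < n \<Longrightarrow> [(\<Sum>x\<in>X. \<omega> x * binom_prod l \<gamma> (\<lambda>k. x * y k)) = 0] (mod m)"
  shows "(\<Sum>k<l. \<alpha> k) < s * n \<Longrightarrow> [choice_sum X \<omega> r s (binom_prod l \<alpha>) = 0] (mod m)"
proof (induction s arbitrary: \<alpha>)
  case 0
  then show ?case by simp
next
  case (Suc s)
  let ?B = "PiE {..<l} (\<lambda>k. {..\<alpha> k})"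
  let ?c = "\<lambda>\<beta>. \<Sum>x\<in>X. \<omega> x * binom_prod l (\<lambda>k. \<alpha> k - \<beta> k) (\<lambda>k. x * r s k)"
  have expand: "binom_prod l \<alpha> (\<lambda>k. v k + x * r s k) =
      (\<Sum>\<beta>\<in>?B. binom_prod l (\<lambda>k. \<alpha> k - \<beta> k) (\<lambda>k. x * r s k) * binom_prod l \<beta> v)" for v x
    unfolding binom_prod_add by (intro sum.cong refl) (rule mult.commute)
  have "choice_sum X \<omega> r (Suc s) (binom_prod l \<alpha>) =
      (\<Sum>x\<in>X. \<omega> x * (\<Sum>\<beta>\<in>?B. binom_prod l (\<lambda>k. \<alpha> k - \<beta> k) (\<lambda>k. x * r s k) * choice_sum X \<omega> r s (binom_prod l \<beta>)))"
    unfolding choice_sum_Suc[OF \<open>finite X\<close>] expand choice_sum_sum ..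
  also have "\<dots> = (\<Sum>\<beta>\<in>?B. ?c \<beta> * choice_sum X \<omega> r s (binom_prod l \<beta>))"
    by (simp add: sum_distrib_left sum_distrib_right sum.swap[of _ X] algebra_simps)
  also have "[\<dots> = (\<Sum>\<beta>\<in>?B. 0)] (mod m)"
  proof (rule cong_sum)
    fix \<beta> assume \<beta>: "\<beta> \<in> ?B"
    have "(\<Sum>k<l. \<beta> k) + (\<Sum>k<l. \<alpha> k - \<beta> k) = (\<Sum>k<l. \<alpha> k)"
      using \<beta> by (simp add: sum.distrib[symmetric] PiE_iff)
    then consider "(\<Sum>k<l. \<beta> k) < s * n" | "(\<Sum>k<l. \<alpha> k - \<beta> k) < n"
      using Suc.prems by fastforce
    then show "[?c \<beta> * choice_sum X \<omega> r s (binom_prod l \<beta>) = 0] (mod m)"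
    proof cases
      case 1
      then show ?thesis using cong_mult[OF cong_refl Suc.IH, of _ "?c \<beta>"] by simp
    next
      case 2
      then show ?thesis using cong_mult[OF ann cong_refl] by simp
    qed
  qed
  finally show ?case by simp
qed

lemma has_A_zero_sumI:
  assumes w: "\<forall>i<t. w i \<in> insert 0 A" and nonzero: "\<exists>i<t. w i \<noteq> 0"
    and dvd: "\<forall>k<l. m k dvd (\<Sum>i<t. w i * r i k)"
    and r: "\<forall>i<t. \<forall>k<l. [int (r i k) = g i k] (mod int (m k))"
  shows "has_A_zero_sum l m A t g"
  unfolding has_A_zero_sum_def
proof (intro exI conjI)
  define I where "I = {i \<in> {0..<t}. w i \<noteq> 0}"
  show "I \<noteq> {}" and "I \<subseteq> {0..<t}" and "\<forall>i\<in>I. w i \<in> A"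
    using w nonzero by (auto simp: I_def)
  show "\<forall>k<l. int (m k) dvd (\<Sum>i\<in>I. int (w i) * g i k)"
  proof (intro allI impI)
    fix k assume k: "k < l"
    have "(\<Sum>i\<in>I. int (w i) * g i k) = (\<Sum>i<t. int (w i) * g i k)"
      by (intro sum.mono_neutral_left) (auto simp: I_def)
    also have "[\<dots> = (\<Sum>i<t. int (w i) * int (r i k))] (mod int (m k))"
      using r k by (intro cong_sum cong_mult cong_refl) (auto intro: cong_sym)
    finally show "int (m k) dvd (\<Sum>i\<in>I. int (w i) * g i k)"
      using dvd k by (simp add: cong_dvd_iff flip: of_nat_mult of_nat_sum)
  qed
qed

lemma choice_sum_alternating_choose_cong:
  fixes p t d :: nat and X :: "nat set" and \<omega> :: "nat \<Rightarrow> int" and q :: "nat \<Rightarrow> nat"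
  assumes p: "prime p" and "finite X" and "d \<le> p"
    and ann: "\<forall>j<d. [(\<Sum>x\<in>X. \<omega> x * int x ^ j) = 0] (mod int p)"
    and long: "(\<Sum>k<l. q k - 1) < t * d"
  shows "[choice_sum X \<omega> r t (\<lambda>v. \<Prod>k<l. \<Sum>j<q k. (-1) ^ j * int (v k choose j)) = 0] (mod int p)"
proof -
  define Box where "Box = PiE {..<l} (\<lambda>k. {..<q k})"
  have "(\<lambda>v. \<Prod>k<l. \<Sum>j<q k. (-1) ^ j * int (v k choose j)) =
      (\<lambda>v. \<Sum>\<alpha>\<in>Box. (-1) ^ (\<Sum>k<l. \<alpha> k) * binom_prod l \<alpha> v)"
    unfolding Box_def binom_prod_def
    by (rule ext, subst prod_sum_PiE) (auto simp: prod.distrib power_sum)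
  then have "choice_sum X \<omega> r t (\<lambda>v. \<Prod>k<l. \<Sum>j<q k. (-1) ^ j * int (v k choose j)) =
      (\<Sum>\<alpha>\<in>Box. (-1) ^ (\<Sum>k<l. \<alpha> k) * choice_sum X \<omega> r t (binom_prod l \<alpha>))"
    by (simp only: choice_sum_sum)
  also have "[\<dots> = (\<Sum>\<alpha>\<in>Box. (-1) ^ (\<Sum>k<l. \<alpha> k) * 0)] (mod int p)"
  proof (intro cong_sum cong_mult cong_refl choice_sum_binom_prod_cong)
    show "finite X" by fact
    show "[(\<Sum>x\<in>X. \<omega> x * binom_prod l \<gamma> (\<lambda>k. x * y k)) = 0] (mod int p)"
      if "(\<Sum>k<l. \<gamma> k) < d" for y \<gamma>
      using annihilating_weights_binom_prod_cong[OF p \<open>d \<le> p\<close> ann that] .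
    fix \<alpha> assume \<alpha>: "\<alpha> \<in> Box"
    have "(\<Sum>k<l. \<alpha> k) \<le> (\<Sum>k<l. q k - 1)"
    proof (rule sum_mono)
      fix k assume "k \<in> {..<l}"
      then have "\<alpha> k < q k"
        using \<alpha> by (simp add: Box_def PiE_iff)
      then show "\<alpha> k \<le> q k - 1"
        by linarith
    qed
    then show "(\<Sum>k<l. \<alpha> k) < t * d"
      using long by simp
  qed
  finally show ?thesis
    by simp
qed

lemma has_A_zero_sum_if_length_gt:
  fixes p l t :: nat and e :: "nat \<Rightarrow> nat" and A :: "nat set" and g :: "nat \<Rightarrow> nat \<Rightarrow> int"
  assumes p: "prime p" and e: "\<forall>k<l. 1 \<le> e k"
    and A: "finite A" "0 \<notin> A" "inj_on (\<lambda>a. a mod p) A"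
    and long: "(\<Sum>k<l. p ^ e k - 1) < t * card A"
  shows "has_A_zero_sum l (\<lambda>k. p ^ e k) A t g"
proof (rule ccontr)
  assume no_zero_sum: "\<not> has_A_zero_sum l (\<lambda>k. p ^ e k) A t g"
  define X where "X = insert 0 A"
  obtain \<omega> where \<omega>0: "\<omega> 0 = 1" and ann: "\<forall>j<card A. [(\<Sum>x\<in>X. \<omega> x * int x ^ j) = 0] (mod int p)"
    using exists_annihilating_weights[OF p A] unfolding X_def by blast
  have "card A \<le> card {..<p}"
    using A(3) prime_gt_0_nat[OF p] by (intro card_inj_on_le) auto
  then have "card A \<le> p"
    by simp
  define r where "r i k = nat (g i k mod int (p ^ e k))" for i k
  define \<Phi> where "\<Phi> v = (\<Prod>k<l. \<Sum>j<p ^ e k. (-1) ^ j * int (v k choose j))" for v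
  define Ind where "Ind v = (\<Prod>k<l. if p ^ e k dvd v k then 1 else 0 :: int)" for v
  have "[choice_sum X \<omega> r t \<Phi> = 0] (mod int p)"
    unfolding \<Phi>_def using A(1) \<open>card A \<le> p\<close> ann long
    by (intro choice_sum_alternating_choose_cong[OF p]) (simp_all add: X_def)
  moreover have "[choice_sum X \<omega> r t \<Phi> = choice_sum X \<omega> r t Ind] (mod int p)"
    unfolding \<Phi>_def Ind_def
    using alternating_sum_choose_prime_power_cong[OF p] e
    by (intro choice_sum_cong cong_prod) auto
  moreover have "choice_sum X \<omega> r t Ind = 1"
  proof -
    have "Ind (\<lambda>k. \<Sum>i<t. w i * r i k) = 0"
      if w: "w \<in> PiE {..<t} (\<lambda>_. X)" and nonzero: "\<exists>i<t. w i \<noteq> 0" for w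
    proof -
      have "\<forall>i<t. \<forall>k<l. [int (r i k) = g i k] (mod int (p ^ e k))"
        using prime_gt_0_nat[OF p] by (simp add: r_def cong_def)
      moreover have "\<forall>i<t. w i \<in> insert 0 A"
        using w by (auto simp: X_def)
      ultimately have "\<not> (\<forall>k<l. p ^ e k dvd (\<Sum>i<t. w i * r i k))"
        using has_A_zero_sumI[of t w A l "\<lambda>k. p ^ e k" r g] nonzero no_zero_sum by blast
      then show ?thesis
        by (auto simp: Ind_def intro: prod_zero)
    qed
    then show ?thesis
      using A(1) \<omega>0 by (subst choice_sum_eq_single) (auto simp: X_def Ind_def)
  qed
  ultimately have "[0 = 1] (mod int p)"
    by (metis cong_sym cong_trans)
  then show False
    using prime_gt_1_nat[OF p] by (simp add: cong_def)
qed

lemma less_nat_ceiling_mult: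
  fixes N n :: nat
  assumes "0 < n"
  shows "N < nat \<lceil>(1 + real N) / real n\<rceil> * n"
proof -
  have "(1 + real N) / real n \<le> \<lceil>(1 + real N) / real n\<rceil>"
    by (rule le_of_int_ceiling)
  then have "1 + real N \<le> \<lceil>(1 + real N) / real n\<rceil> * real n"
    using assms by (simp only: pos_divide_le_eq of_nat_0_less_iff)
  moreover have "real (nat \<lceil>(1 + real N) / real n\<rceil>) = \<lceil>(1 + real N) / real n\<rceil>"
    by simp
  ultimately have "real N < real (nat \<lceil>(1 + real N) / real n\<rceil> * n)"
    by simp
  then show ?thesis
    by (simp only: of_nat_less_iff)
qed

theorem theorem1:
  fixes p l :: nat and e :: "nat \<Rightarrow> nat" and A :: "nat set"
  assumes "prime p"
    and "l \<ge> 1"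
    and "\<forall>i<l. 1 \<le> e i"
    and "\<forall>i j. i \<le> j \<longrightarrow> j < l \<longrightarrow> e i \<le> e j"
    and "A \<noteq> {}"
    and "A \<subseteq> {1..p ^ e (l - 1)}"
    and "\<forall>a\<in>A. \<not> p dvd a"
    and "\<forall>a\<in>A. \<forall>b\<in>A. a \<noteq> b \<longrightarrow> a mod p \<noteq> b mod p"
  shows "int (dA l (\<lambda>i. p ^ e i) A)
           \<le> ceiling ((1 + (\<Sum>i<l. (real (p ^ e i) - 1))) / real (card A))"
proof -
  have A: "finite A" "0 \<notin> A" "inj_on (\<lambda>a. a mod p) A"
    using assms(6,8) finite_subset[OF assms(6)] by (auto simp: inj_on_def)
  define N where "N = (\<Sum>i<l. p ^ e i - 1)"
  have N: "(\<Sum>i<l. (real (p ^ e i) - 1)) = real N"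
    unfolding N_def of_nat_sum using prime_gt_0_nat[OF assms(1)]
    by (intro sum.cong) (simp_all add: of_nat_diff)
  define t where "t = nat \<lceil>(1 + real N) / real (card A)\<rceil>"
  have "N < t * card A"
    unfolding t_def using A(1) assms(5) by (intro less_nat_ceiling_mult) (simp add: card_gt_0_iff)
  then have "1 \<le> t" and "\<forall>g. has_A_zero_sum l (\<lambda>i. p ^ e i) A t g"
    using has_A_zero_sum_if_length_gt[OF assms(1,3) A] unfolding N_def
    by (simp_all add: Suc_le_eq) (cases t; simp)
  then have "dA l (\<lambda>i. p ^ e i) A \<le> t"
    unfolding dA_def by (intro Least_le) simp
  moreover have "int t = \<lceil>(1 + real N) / real (card A)\<rceil>"
    unfolding t_def by (intro nat_0_le) (simp add: less_le_trans[OF _ divide_nonneg_nonneg])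
  ultimately show ?thesis
    unfolding N by linarith
qed

end
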